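(* For every integer $n\ge 0$, $$\Phi^{(2)}[a; bq^n, b'; c, c'; x, y] = \sum_{k=0}^n \begin{bmatrix} n \\ k \end{bmatrix} q^{2\binom{k}{2}} \frac{(bx)^k (a; q)_k}{(c; q)_k} \Phi^{(2)}[aq^k; bq^k, b'; cq^k, c'; x, y]$$ and $$\Phi^{(2)}[a; bq^{-n}, b'; c, c'; x, y] = \sum_{k=0}^n \begin{bmatrix} n \\ k \end{bmatrix} q^{\binom{k}{2} - nk} \frac{(-bx)^k (a; q)_k}{(c; q)_k} \Phi^{(2)}[aq^k; b, b'; cq^k, c'; x, y].$$
   Context: Let $q$ be a complex number with $0<|q|<1$. For complex $z$ and integer $m\ge 0$, $(z;q)_m=\prod_{j=0}^{m-1}(1-zq^j)$, with $(z;q)_0=1$. For integers $0\le k\le n$, $\begin{bmatrix} n \\ k \end{bmatrix}=\frac{(q;q)_n}{(q;q)_k(q;q)_{n-k}}$ is the $q$-binomial coefficient. The $q$-Appell function $\Phi^{(2)}$ is $$\Phi^{(2)}[a; b, b'; c, c'; x, y] = \sum_{m, n \geq 0} \frac{(a; q)_{m+n} (b; q)_m (b'; q)_n}{(q; q)_m (q; q)_n (c; q)_m (c'; q)_n} x^m y^n.$$ Identities are understood as identities of power series in $x,y$ (formal, or convergent for small $|x|,|y|$), with complex parameters chosen so that no denominator occurring vanishes. *)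

theory Defs
  imports "HOL-Analysis.Analysis"
begin

definition qpoch :: "complex \<Rightarrow> complex \<Rightarrow> nat \<Rightarrow> complex" where
  "qpoch z q m = (\<Prod>j<m. 1 - z * q ^ j)"

definition qbinom :: "complex \<Rightarrow> nat \<Rightarrow> nat \<Rightarrow> complex" where
  "qbinom q n k = qpoch q q n / (qpoch q q k * qpoch q q (n - k))"

definition Phi2 :: "complex \<Rightarrow> complex \<Rightarrow> complex \<Rightarrow> complex \<Rightarrow> complex \<Rightarrow> complex \<Rightarrow>
    complex \<Rightarrow> complex \<Rightarrow> complex" where
  "Phi2 q a b b' c c' x y =
     (\<Sum>\<^sub>\<infinity>(m, n) \<in> UNIV.
        qpoch a q (m + n) * qpoch b q m * qpoch b' q n /
        (qpoch q q m * qpoch q q n * qpoch c q m * qpoch c' q n) * x ^ m * y ^ n)"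

end

theory Submission
  imports Defs
begin

(* Comparing coefficients gives the contiguous relation
     Phi2[a; bq, b'; c, c'; x, y] =
       Phi2[a; b, b'; c, c'; x, y] + bx(1-a)/(1-c) Phi2[aq; bq, b'; cq, c'; x, y].
   All series involved converge absolutely for |x|, |y| below a radius that depends only on bounds
   for |a|, |b|, |b'|: the numerators satisfy |(z;q)_m| <= (1+|z|)^m, and 1/(c;q)_m stays bounded
   since (c;q)_m tends to (c;q)_inf, which is nonzero. Iterating the relation n times and collecting
   coefficients with the two q-Pascal rules yields both expansions; the second one is proved with b
   replaced by b q^n, which removes the negative powers of q. *)

lemma qpoch_0 [simp]: "qpoch z q 0 = 1"
  by (simp add: qpoch_def)

lemma qpoch_Suc: "qpoch z q (Suc m) = qpoch z q m * (1 - z * q ^ m)"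
  by (simp add: qpoch_def)

lemma qpoch_Suc_shift: "qpoch z q (Suc m) = (1 - z) * qpoch (z * q) q m"
  unfolding qpoch_def by (subst prod.lessThan_Suc_shift) (simp add: mult.assoc)

lemma qpoch_add: "qpoch z q (m + k) = qpoch z q k * qpoch (z * q ^ k) q m"
  by (induction m) (simp_all add: qpoch_Suc power_add mult_ac)

lemma qpoch_mult_qpow_nonzero:
  assumes "\<forall>m. qpoch c q m \<noteq> 0"
  shows "\<forall>m. qpoch (c * q ^ k) q m \<noteq> 0"
  by (metis assms mult_eq_0_iff qpoch_add)

lemma qpoch_q_nonzero:
  assumes "norm q < 1"
  shows "qpoch q q m \<noteq> 0"
proof -
  have "q * q ^ j \<noteq> 1" for j
  proof -
    have "norm q ^ Suc j \<le> norm q"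
      using assms power_decreasing[of 1 "Suc j" "norm q"] by simp
    with assms have "norm (q * q ^ j) < 1"
      by (simp add: norm_mult norm_power)
    then show ?thesis by auto
  qed
  then show ?thesis
    by (simp add: qpoch_def)
qed

lemma qpoch_mult_q_diff:
  "qpoch (b * q) q (Suc m) - qpoch b q (Suc m) = b * (1 - q ^ Suc m) * qpoch (b * q) q m"
  by (simp add: qpoch_Suc_shift[of b] qpoch_Suc[of "b * q"] algebra_simps)

lemma norm_mult_power_le:
  fixes z q :: complex
  assumes "norm q \<le> 1"
  shows "norm (z * q ^ k) \<le> norm z"
  using assms by (simp add: norm_mult norm_power mult_left_le power_le_one)

lemma norm_qpoch_le:
  assumes "norm q \<le> 1" and "norm z \<le> A"
  shows "norm (qpoch z q m) \<le> (1 + A) ^ m"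
proof (induction m)
  case (Suc m)
  have "norm (1 - z * q ^ m) \<le> 1 + A"
    using norm_triangle_ineq4[of 1 "z * q ^ m"] norm_mult_power_le[OF assms(1), of z m] assms(2)
    by simp
  moreover have "0 \<le> A"
    using assms(2) norm_ge_zero order_trans by blast
  ultimately have "norm (qpoch z q m) * norm (1 - z * q ^ m) \<le> (1 + A) ^ m * (1 + A)"
    using Suc by (intro mult_mono) auto
  then show ?case
    by (simp add: qpoch_Suc norm_mult mult.commute)
qed simp

lemma bounded_inverse_qpoch:
  assumes q: "norm q < 1" and nonzero: "\<forall>m. qpoch c q m \<noteq> 0"
  obtains K where "\<And>m. norm (inverse (qpoch c q m)) \<le> K"
proof -
  define f where "f j = 1 - c * q ^ j" for j
  have "summable (\<lambda>j. norm c * norm q ^ j)"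
    using q by (simp add: summable_geometric)
  then have "convergent_prod f"
    by (intro abs_convergent_prod_imp_convergent_prod summable_imp_abs_convergent_prod)
       (simp add: f_def norm_mult norm_power)
  moreover have "f j \<noteq> 0" for j
    using nonzero[rule_format, of "Suc j"] by (simp add: qpoch_Suc f_def)
  moreover have "qpoch c q (Suc m) = (\<Prod>j\<le>m. f j)" for m
    by (simp add: qpoch_def f_def lessThan_Suc_atMost)
  ultimately have "prodinf f \<noteq> 0" and "(\<lambda>m. qpoch c q (Suc m)) \<longlonglongrightarrow> prodinf f"
    using prodinf_nonzero convergent_prod_LIMSEQ by auto
  then have "(\<lambda>m. inverse (qpoch c q m)) \<longlonglongrightarrow> inverse (prodinf f)"
    by (auto intro: tendsto_inverse LIMSEQ_imp_Suc)
  then have "Bseq (\<lambda>m. inverse (qpoch c q m))"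
    by (rule convergent_imp_Bseq[OF convergentI])
  then show ?thesis
    using that by (auto simp: Bseq_def)
qed

lemma qbinom_0 [simp]: "norm q < 1 \<Longrightarrow> qbinom q n 0 = 1"
  using qpoch_q_nonzero[of q n] by (simp add: qbinom_def)

lemma qbinom_self [simp]: "norm q < 1 \<Longrightarrow> qbinom q n n = 1"
  using qpoch_q_nonzero[of q n] by (simp add: qbinom_def)

lemma qbinom_Suc_Suc:
  assumes "norm q < 1" and "k < n"
  shows "qbinom q (Suc n) (Suc k) = q ^ Suc k * qbinom q n (Suc k) + qbinom q n k"
    and "qbinom q (Suc n) (Suc k) = qbinom q n (Suc k) + q ^ (n - k) * qbinom q n k"
proof -
  obtain d where n: "n = Suc (k + d)"
    using assms(2) less_imp_Suc_add by blast
  define t s where "t = q ^ Suc k" and "s = q ^ Suc d"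
  have "qpoch q q j * (1 - q ^ Suc j) \<noteq> 0" for j
    using qpoch_q_nonzero[OF assms(1), of "Suc j"] by (simp add: qpoch_Suc)
  then have nonzero: "qpoch q q k \<noteq> 0" "qpoch q q d \<noteq> 0" "1 - t \<noteq> 0" "1 - s \<noteq> 0"
    unfolding t_def s_def by simp_all
  have binoms:
    "qbinom q (Suc n) (Suc k) =
      qpoch q q n * (1 - t * s) / (qpoch q q k * (1 - t) * (qpoch q q d * (1 - s)))"
    "qbinom q n (Suc k) = qpoch q q n / (qpoch q q k * (1 - t) * qpoch q q d)"
    "qbinom q n k = qpoch q q n / (qpoch q q k * (qpoch q q d * (1 - s)))"
    "q ^ (n - k) = s"
    unfolding qbinom_def t_def s_def by (simp_all add: qpoch_Suc n power_add mult_ac)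
  show "qbinom q (Suc n) (Suc k) = q ^ Suc k * qbinom q n (Suc k) + qbinom q n k"
    and "qbinom q (Suc n) (Suc k) = qbinom q n (Suc k) + q ^ (n - k) * qbinom q n k"
    unfolding t_def[symmetric] binoms using nonzero
    by (simp_all add: divide_simps) (simp_all add: algebra_simps)
qed

lemma sum_atMost_collect_shift:
  fixes \<alpha> \<beta> \<gamma> T :: "nat \<Rightarrow> 'a::comm_semiring_1"
  assumes "\<gamma> 0 = \<alpha> 0"
    and "\<And>k. k < n \<Longrightarrow> \<gamma> (Suc k) = \<alpha> (Suc k) + \<alpha> k * \<beta> k"
    and "\<gamma> (Suc n) = \<alpha> n * \<beta> n"
  shows "(\<Sum>k\<le>n. \<alpha> k * (T k + \<beta> k * T (Suc k))) = (\<Sum>k\<le>Suc n. \<gamma> k * T k)"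
proof -
  have "(\<Sum>k\<le>n. \<alpha> k * (T k + \<beta> k * T (Suc k))) =
      (\<Sum>k\<le>n. \<alpha> k * T k) + (\<Sum>k\<le>n. \<alpha> k * \<beta> k * T (Suc k))"
    by (simp add: sum.distrib distrib_left mult.assoc)
  also have "\<dots> = \<alpha> 0 * T 0 + (\<Sum>k<n. (\<alpha> (Suc k) + \<alpha> k * \<beta> k) * T (Suc k)) +
      \<alpha> n * \<beta> n * T (Suc n)"
    unfolding sum.atMost_shift[of "\<lambda>k. \<alpha> k * T k"]
    by (simp add: lessThan_Suc_atMost[symmetric] sum.distrib distrib_right add_ac)
  also have "\<dots> = (\<Sum>k\<le>Suc n. \<gamma> k * T k)"
    using assms by (simp add: sum.atMost_Suc_shift add.assoc del: sum.atMost_Suc)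
      (simp add: lessThan_Suc_atMost[symmetric])
  finally show ?thesis .
qed

definition Phi2_term :: "complex \<Rightarrow> complex \<Rightarrow> complex \<Rightarrow> complex \<Rightarrow> complex \<Rightarrow> complex \<Rightarrow>
    complex \<Rightarrow> complex \<Rightarrow> nat \<times> nat \<Rightarrow> complex" where
  "Phi2_term q a b b' c c' x y = (\<lambda>(m, n).
     qpoch a q (m + n) * qpoch b q m * qpoch b' q n /
     (qpoch q q m * qpoch q q n * qpoch c q m * qpoch c' q n) * x ^ m * y ^ n)"

lemma Phi2_eq_infsum: "Phi2 q a b b' c c' x y = (\<Sum>\<^sub>\<infinity>p. Phi2_term q a b b' c c' x y p)"
  unfolding Phi2_def Phi2_term_def ..

definition Phi2_radius :: "real \<Rightarrow> real \<Rightarrow> real \<Rightarrow> real" where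
  "Phi2_radius A B B' = inverse ((1 + A) * (1 + B) * (1 + B'))"

lemma Phi2_radius_pos: "0 \<le> A \<Longrightarrow> 0 \<le> B \<Longrightarrow> 0 \<le> B' \<Longrightarrow> 0 < Phi2_radius A B B'"
  by (simp add: Phi2_radius_def)

lemma summable_on_geometric_product:
  fixes u v :: real
  assumes "0 \<le> u" "u < 1" "0 \<le> v" "v < 1"
  shows "(\<lambda>(m, n). u ^ m * v ^ n) summable_on UNIV"
proof -
  have "(\<lambda>m. u ^ m) summable_on UNIV" "(\<lambda>n. v ^ n) summable_on UNIV"
    using assms by (simp_all add: summable_on_UNIV_nonneg_real_iff summable_geometric)
  then have "(\<lambda>p. norm (case p of (m, n) \<Rightarrow> u ^ m * v ^ n)) summable_on UNIV"
    using assms abs_summable_on_product[of "UNIV :: nat set" "UNIV :: nat set" "\<lambda>m. u ^ m" "\<lambda>n. v ^ n"]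
    by (simp add: abs_summable_equivalent[symmetric] power_abs)
  then show ?thesis
    by (rule abs_summable_summable)
qed

lemma norm_Phi2_term_le:
  assumes q: "norm q < 1" and c: "\<forall>m. qpoch c q m \<noteq> 0" and c': "\<forall>m. qpoch c' q m \<noteq> 0"
    and a: "norm a \<le> A" and b: "norm b \<le> B"
  obtains K where "\<And>m n. norm (Phi2_term q a b b' c c' x y (m, n)) \<le>
    K * ((norm x / Phi2_radius A B (norm b')) ^ m * (norm y / Phi2_radius A B (norm b')) ^ n)"
proof -
  obtain Kq where Kq: "\<And>m. norm (inverse (qpoch q q m)) \<le> Kq"
    using bounded_inverse_qpoch[OF q] qpoch_q_nonzero[OF q] by metis
  obtain Kc where Kc: "\<And>m. norm (inverse (qpoch c q m)) \<le> Kc"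
    using bounded_inverse_qpoch[OF q c] by metis
  obtain Kc' where Kc': "\<And>m. norm (inverse (qpoch c' q m)) \<le> Kc'"
    using bounded_inverse_qpoch[OF q c'] by metis
  define R where "R = (1 + A) * (1 + B) * (1 + norm b')"
  have "0 \<le> A" "0 \<le> B" "0 \<le> norm b'"
    using a b norm_ge_zero order_trans by blast+
  then have R_ge: "(1 + A) * (1 + B) \<le> R" "(1 + A) * (1 + norm b') \<le> R" and "0 < R"
    unfolding R_def by (simp_all add: add_pos_nonneg add_strict_increasing)
  have numer: "norm (qpoch a q (m + n) * qpoch b q m * qpoch b' q n) \<le> R ^ m * R ^ n" for m n
  proof -
    have "norm (qpoch a q (m + n) * qpoch b q m * qpoch b' q n) \<le>
        (1 + A) ^ (m + n) * (1 + B) ^ m * (1 + norm b') ^ n"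
      unfolding norm_mult using q a b \<open>0 \<le> A\<close> \<open>0 \<le> B\<close>
      by (intro mult_mono norm_qpoch_le) auto
    also have "\<dots> = ((1 + A) * (1 + B)) ^ m * ((1 + A) * (1 + norm b')) ^ n"
      by (simp add: power_add power_mult_distrib mult_ac)
    also have "\<dots> \<le> R ^ m * R ^ n"
      using R_ge \<open>0 \<le> A\<close> \<open>0 \<le> B\<close> \<open>0 < R\<close> by (intro mult_mono power_mono) auto
    finally show ?thesis .
  qed
  have denom: "norm (inverse (qpoch q q m * qpoch q q n * qpoch c q m * qpoch c' q n)) \<le>
      Kq * Kq * Kc * Kc'" for m n
    unfolding inverse_mult_distrib norm_mult
    using Kq Kc Kc' order_trans[OF norm_ge_zero Kq] order_trans[OF norm_ge_zero Kc]
    by (intro mult_mono) auto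
  have "norm (Phi2_term q a b b' c c' x y (m, n)) =
      norm (qpoch a q (m + n) * qpoch b q m * qpoch b' q n) *
      norm (inverse (qpoch q q m * qpoch q q n * qpoch c q m * qpoch c' q n)) *
      (norm x ^ m * norm y ^ n)" for m n
    by (simp add: Phi2_term_def divide_inverse norm_mult norm_power mult_ac)
  also have "\<dots> m n \<le> (R ^ m * R ^ n) * (Kq * Kq * Kc * Kc') * (norm x ^ m * norm y ^ n)" for m n
    using numer[of m n] denom[of m n] order_trans[OF norm_ge_zero numer[of m n]]
      order_trans[OF norm_ge_zero denom[of m n]]
    by (intro mult_mono) auto
  also have "\<dots> m n = (Kq * Kq * Kc * Kc') *
      ((norm x / Phi2_radius A B (norm b')) ^ m * (norm y / Phi2_radius A B (norm b')) ^ n)" for m n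
    unfolding Phi2_radius_def R_def[symmetric] by (simp add: divide_inverse power_mult_distrib mult_ac)
  finally show ?thesis
    using that by blast
qed

lemma Phi2_term_summable:
  assumes q: "norm q < 1" and c: "\<forall>m. qpoch c q m \<noteq> 0" and c': "\<forall>m. qpoch c' q m \<noteq> 0"
    and a: "norm a \<le> A" and b: "norm b \<le> B"
    and x: "norm x < Phi2_radius A B (norm b')" and y: "norm y < Phi2_radius A B (norm b')"
  shows "Phi2_term q a b b' c c' x y summable_on UNIV"
proof -
  define r where "r = Phi2_radius A B (norm b')"
  obtain K where bound: "\<And>m n. norm (Phi2_term q a b b' c c' x y (m, n)) \<le>
      K * ((norm x / r) ^ m * (norm y / r) ^ n)"
    using norm_Phi2_term_le[OF q c c' a b] unfolding r_def by metis
  have "0 < r"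
    using order_le_less_trans[OF norm_ge_zero x] by (simp add: r_def)
  then have "0 \<le> norm x / r" "norm x / r < 1" "0 \<le> norm y / r" "norm y / r < 1"
    using x y by (simp_all add: r_def)
  then have "(\<lambda>p. K * (case p of (m, n) \<Rightarrow> (norm x / r) ^ m * (norm y / r) ^ n)) summable_on UNIV"
    by (intro summable_on_cmult_right summable_on_geometric_product)
  then have "(\<lambda>p. norm (Phi2_term q a b b' c c' x y p)) summable_on UNIV"
    by (rule summable_on_comparison_test) (auto simp: bound)
  then show ?thesis
    by (rule abs_summable_summable)
qed

lemma Phi2_term_contiguous_b:
  assumes q: "norm q < 1" and c: "\<forall>m. qpoch c q m \<noteq> 0" and c': "\<forall>m. qpoch c' q m \<noteq> 0"
  shows "Phi2_term q a (b * q) b' c c' x y (Suc m, n) - Phi2_term q a b b' c c' x y (Suc m, n) =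
    b * x * (1 - a) / (1 - c) * Phi2_term q (a * q) (b * q) b' (c * q) c' x y (m, n)"
proof -
  have "qpoch q q m * (1 - q ^ Suc m) \<noteq> 0"
    using qpoch_q_nonzero[OF q, of "Suc m"] by (simp add: qpoch_Suc)
  moreover have "(1 - c) * qpoch (c * q) q m \<noteq> 0"
    using c qpoch_Suc_shift[of c q m] by metis
  ultimately have nonzero: "qpoch q q m \<noteq> 0" "1 - q ^ Suc m \<noteq> 0" "1 - c \<noteq> 0"
    "qpoch (c * q) q m \<noteq> 0" "qpoch q q n \<noteq> 0" "qpoch c' q n \<noteq> 0"
    using qpoch_q_nonzero[OF q] c' by simp_all
  have "Phi2_term q a (b * q) b' c c' x y (Suc m, n) - Phi2_term q a b b' c c' x y (Suc m, n) =
      qpoch a q (Suc m + n) * (qpoch (b * q) q (Suc m) - qpoch b q (Suc m)) * qpoch b' q n /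
      (qpoch q q (Suc m) * qpoch q q n * qpoch c q (Suc m) * qpoch c' q n) * x ^ Suc m * y ^ n"
    by (simp add: Phi2_term_def divide_inverse algebra_simps)
  also have "\<dots> = (1 - a) * qpoch (a * q) q (m + n) * (b * (1 - q ^ Suc m) * qpoch (b * q) q m) *
      qpoch b' q n / (qpoch q q m * (1 - q ^ Suc m) * qpoch q q n * ((1 - c) * qpoch (c * q) q m) *
      qpoch c' q n) * (x * x ^ m) * y ^ n"
    by (simp only: qpoch_mult_q_diff add_Suc qpoch_Suc_shift[of a] qpoch_Suc_shift[of c]
        qpoch_Suc[of q] power_Suc[of x] power_Suc[of q] mult.assoc)
  also have "\<dots> = b * x * (1 - a) / (1 - c) * Phi2_term q (a * q) (b * q) b' (c * q) c' x y (m, n)"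
    using nonzero by (simp add: Phi2_term_def divide_simps)
  finally show ?thesis .
qed

lemma Phi2_contiguous_b:
  assumes q: "norm q < 1" and c: "\<forall>m. qpoch c q m \<noteq> 0" and c': "\<forall>m. qpoch c' q m \<noteq> 0"
    and summable: "Phi2_term q a b b' c c' x y summable_on UNIV"
      "Phi2_term q (a * q) (b * q) b' (c * q) c' x y summable_on UNIV"
  shows "Phi2 q a (b * q) b' c c' x y =
    Phi2 q a b b' c c' x y + b * x * (1 - a) / (1 - c) * Phi2 q (a * q) (b * q) b' (c * q) c' x y"
proof -
  define K where "K = b * x * (1 - a) / (1 - c)"
  define d where "d p = Phi2_term q a (b * q) b' c c' x y p - Phi2_term q a b b' c c' x y p" for p
  define shift :: "nat \<times> nat \<Rightarrow> nat \<times> nat" where "shift = (\<lambda>(m, n). (Suc m, n))"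
  have "((\<lambda>p. K * Phi2_term q (a * q) (b * q) b' (c * q) c' x y p) has_sum
      K * Phi2 q (a * q) (b * q) b' (c * q) c' x y) UNIV"
    using summable(2) unfolding Phi2_eq_infsum summable_iff_has_sum_infsum
    by (rule has_sum_cmult_right)
  moreover have "d \<circ> shift = (\<lambda>p. K * Phi2_term q (a * q) (b * q) b' (c * q) c' x y p)"
    by (auto simp: fun_eq_iff shift_def d_def K_def Phi2_term_contiguous_b[OF q c c'])
  moreover have "inj shift"
    by (auto simp: inj_def shift_def)
  ultimately have "(d has_sum K * Phi2 q (a * q) (b * q) b' (c * q) c' x y) (range shift)"
    by (simp add: has_sum_reindex)
  moreover have "d p = 0" if "p \<notin> range shift" for p
  proof -
    obtain m n where p: "p = (m, n)"
      by fastforce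
    with that have "m = 0"
      by (metis not0_implies_Suc rangeI case_prod_conv shift_def)
    with p show ?thesis
      by (simp add: d_def Phi2_term_def)
  qed
  ultimately have "(d has_sum K * Phi2 q (a * q) (b * q) b' (c * q) c' x y) UNIV"
    by (subst has_sum_cong_neutral[where T = "range shift" and g = d]) auto
  moreover have "(Phi2_term q a b b' c c' x y has_sum Phi2 q a b b' c c' x y) UNIV"
    using summable(1) unfolding Phi2_eq_infsum summable_iff_has_sum_infsum .
  ultimately have "((\<lambda>p. Phi2_term q a b b' c c' x y p + d p) has_sum
      Phi2 q a b b' c c' x y + K * Phi2 q (a * q) (b * q) b' (c * q) c' x y) UNIV"
    by (intro has_sum_add)
  then show ?thesis
    unfolding K_def by (simp add: d_def Phi2_eq_infsum[of q a "b * q"] infsumI)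
qed

lemma Phi2_contiguous_b_qpow:
  assumes q: "norm q < 1" and c: "\<forall>m. qpoch c q m \<noteq> 0" and c': "\<forall>m. qpoch c' q m \<noteq> 0"
    and a: "norm a \<le> A" and b: "norm b \<le> B"
    and x: "norm x < Phi2_radius A B (norm b')" and y: "norm y < Phi2_radius A B (norm b')"
  shows "Phi2 q (a * q ^ k) (b * q ^ Suc j) b' (c * q ^ k) c' x y =
    Phi2 q (a * q ^ k) (b * q ^ j) b' (c * q ^ k) c' x y +
    b * q ^ j * x * (1 - a * q ^ k) / (1 - c * q ^ k) *
    Phi2 q (a * q ^ Suc k) (b * q ^ Suc j) b' (c * q ^ Suc k) c' x y"
proof -
  have "Phi2_term q (a * q ^ i) (b * q ^ l) b' (c * q ^ i) c' x y summable_on UNIV" for i l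
    using q a b x y norm_mult_power_le[of q a i] norm_mult_power_le[of q b l]
    by (intro Phi2_term_summable[where A = A and B = B] qpoch_mult_qpow_nonzero c c') auto
  from this[of k j] this[of "Suc k" "Suc j"] show ?thesis
    using Phi2_contiguous_b[OF q qpoch_mult_qpow_nonzero[OF c, of k] c', where a = "a * q ^ k" and b = "b * q ^ j"]
    by (simp add: power_commutes mult.assoc)
qed

lemma Suc_choose_two: "Suc k choose 2 = (k choose 2) + k"
  by (simp add: numeral_2_eq_2)

lemma Phi2_b_mult_qpow_expansion:
  assumes q: "norm q < 1" and c: "\<forall>m. qpoch c q m \<noteq> 0" and c': "\<forall>m. qpoch c' q m \<noteq> 0"
    and a: "norm a \<le> A" and b: "norm b \<le> B"
    and x: "norm x < Phi2_radius A B (norm b')" and y: "norm y < Phi2_radius A B (norm b')"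
  shows "Phi2 q a (b * q ^ n) b' c c' x y =
    (\<Sum>k\<le>n. qbinom q n k * q ^ (2 * (k choose 2)) * ((b * x) ^ k * qpoch a q k / qpoch c q k) *
      Phi2 q (a * q ^ k) (b * q ^ k) b' (c * q ^ k) c' x y)"
  using b
proof (induction n arbitrary: b)
  case 0
  show ?case
    using q by (simp add: binomial_eq_0)
next
  case (Suc n)
  define T where "T k = Phi2 q (a * q ^ k) (b * q ^ k) b' (c * q ^ k) c' x y" for k
  define \<alpha> where "\<alpha> k = qbinom q n k * q ^ (2 * (k choose 2)) * ((b * q * x) ^ k * qpoch a q k / qpoch c q k)"
    for k
  define \<beta> where "\<beta> k = b * q ^ k * x * (1 - a * q ^ k) / (1 - c * q ^ k)" for k
  define \<gamma> where "\<gamma> k = qbinom q (Suc n) k * q ^ (2 * (k choose 2)) * ((b * x) ^ k * qpoch a q k / qpoch c q k)"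
    for k
  have nonzero: "qpoch c q k \<noteq> 0" "1 - c * q ^ k \<noteq> 0" for k
    using c[rule_format, of "Suc k"] by (simp_all add: qpoch_Suc)
  have "norm (b * q) \<le> B"
    using Suc.prems norm_mult_power_le[of q b 1] q by simp
  then have "Phi2 q a (b * q ^ Suc n) b' c c' x y =
      (\<Sum>k\<le>n. \<alpha> k * Phi2 q (a * q ^ k) (b * q ^ Suc k) b' (c * q ^ k) c' x y)"
    using Suc.IH[of "b * q"] by (simp add: \<alpha>_def mult.assoc)
  also have "\<dots> = (\<Sum>k\<le>n. \<alpha> k * (T k + \<beta> k * T (Suc k)))"
    using Phi2_contiguous_b_qpow[OF q c c' a Suc.prems x y] by (simp add: T_def \<beta>_def)
  also have "\<dots> = (\<Sum>k\<le>Suc n. \<gamma> k * T k)"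
  proof (rule sum_atMost_collect_shift)
    show "\<gamma> 0 = \<alpha> 0"
      using q by (simp add: \<alpha>_def \<gamma>_def)
  next
    fix k
    assume "k < n"
    then show "\<gamma> (Suc k) = \<alpha> (Suc k) + \<alpha> k * \<beta> k"
      unfolding \<alpha>_def \<beta>_def \<gamma>_def qbinom_Suc_Suc(1)[OF q \<open>k < n\<close>] Suc_choose_two qpoch_Suc
      using nonzero[of k]
      by (simp add: power_add power_mult power2_eq_square power_mult_distrib divide_simps)
        (simp add: algebra_simps)
  next
    show "\<gamma> (Suc n) = \<alpha> n * \<beta> n"
      unfolding \<alpha>_def \<beta>_def \<gamma>_def Suc_choose_two qpoch_Suc
      using q nonzero[of n]
      by (simp add: power_add power_mult power2_eq_square power_mult_distrib divide_simps)
  qed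
  finally show ?case
    by (simp add: \<gamma>_def T_def)
qed

lemma Phi2_b_expansion:
  assumes q: "norm q < 1" and c: "\<forall>m. qpoch c q m \<noteq> 0" and c': "\<forall>m. qpoch c' q m \<noteq> 0"
    and x: "norm x < Phi2_radius (norm a) (norm b) (norm b')"
    and y: "norm y < Phi2_radius (norm a) (norm b) (norm b')"
  shows "Phi2 q a b b' c c' x y =
    (\<Sum>k\<le>n. qbinom q n k * q ^ (k choose 2) * ((- b * x) ^ k * qpoch a q k / qpoch c q k) *
      Phi2 q (a * q ^ k) (b * q ^ n) b' (c * q ^ k) c' x y)"
proof (induction n)
  case 0
  show ?case
    using q by (simp add: binomial_eq_0)
next
  case (Suc n)
  define T where "T k = Phi2 q (a * q ^ k) (b * q ^ Suc n) b' (c * q ^ k) c' x y" for k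
  define \<alpha> where "\<alpha> k = qbinom q n k * q ^ (k choose 2) * ((- b * x) ^ k * qpoch a q k / qpoch c q k)" for k
  define \<beta> where "\<beta> k = - (b * q ^ n * x * (1 - a * q ^ k) / (1 - c * q ^ k))" for k
  define \<gamma> where "\<gamma> k = qbinom q (Suc n) k * q ^ (k choose 2) * ((- b * x) ^ k * qpoch a q k / qpoch c q k)"
    for k
  have nonzero: "qpoch c q k \<noteq> 0" "1 - c * q ^ k \<noteq> 0" for k
    using c[rule_format, of "Suc k"] by (simp_all add: qpoch_Suc)
  have "Phi2 q a b b' c c' x y = (\<Sum>k\<le>n. \<alpha> k * Phi2 q (a * q ^ k) (b * q ^ n) b' (c * q ^ k) c' x y)"
    using Suc.IH by (simp add: \<alpha>_def)
  also have "\<dots> = (\<Sum>k\<le>n. \<alpha> k * (T k + \<beta> k * T (Suc k)))"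
    using Phi2_contiguous_b_qpow[OF q c c' order_refl order_refl x y, of _ n] by (simp add: T_def \<beta>_def)
  also have "\<dots> = (\<Sum>k\<le>Suc n. \<gamma> k * T k)"
  proof (rule sum_atMost_collect_shift)
    show "\<gamma> 0 = \<alpha> 0"
      using q by (simp add: \<alpha>_def \<gamma>_def)
  next
    fix k
    assume "k < n"
    then have "q ^ n = q ^ (n - k) * q ^ k"
      by (simp flip: power_add)
    then show "\<gamma> (Suc k) = \<alpha> (Suc k) + \<alpha> k * \<beta> k"
      unfolding \<alpha>_def \<beta>_def \<gamma>_def qbinom_Suc_Suc(2)[OF q \<open>k < n\<close>] Suc_choose_two qpoch_Suc
      using nonzero[of k] by (simp add: power_add divide_simps) (simp add: algebra_simps)
  next
    show "\<gamma> (Suc n) = \<alpha> n * \<beta> n"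
      unfolding \<alpha>_def \<beta>_def \<gamma>_def Suc_choose_two qpoch_Suc
      using q nonzero[of n] by (simp add: power_add divide_simps)
  qed
  finally show ?case
    by (simp add: \<gamma>_def T_def)
qed

lemma Phi2_b_div_qpow_expansion:
  assumes q: "norm q < 1" "q \<noteq> 0"
    and c: "\<forall>m. qpoch c q m \<noteq> 0" and c': "\<forall>m. qpoch c' q m \<noteq> 0"
    and x: "norm x < Phi2_radius (norm a) (norm (b * q powi (- int n))) (norm b')"
    and y: "norm y < Phi2_radius (norm a) (norm (b * q powi (- int n))) (norm b')"
  shows "Phi2 q a (b * q powi (- int n)) b' c c' x y =
    (\<Sum>k\<le>n. qbinom q n k * q powi (int (k choose 2) - int (n * k)) *
      ((- b * x) ^ k * qpoch a q k / qpoch c q k) * Phi2 q (a * q ^ k) b b' (c * q ^ k) c' x y)"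
proof -
  define b\<^sub>0 where "b\<^sub>0 = b * q powi (- int n)"
  have b: "b\<^sub>0 * q ^ n = b"
    using q(2) by (simp add: b\<^sub>0_def power_int_minus field_simps)
  have coeff: "w * q ^ (k choose 2) * ((- b\<^sub>0 * x) ^ k * z / z') =
      w * q powi (int (k choose 2) - int (n * k)) * ((- b * x) ^ k * z / z')" for w z z' k
  proof -
    have powi: "q powi (int (k choose 2) - int (n * k)) * q ^ (n * k) = q ^ (k choose 2)"
      using q(2) by (subst power_int_diff) (simp_all del: of_nat_mult add: power_int_of_nat)
    have "- b * x = (- b\<^sub>0 * x) * q ^ n"
      by (simp flip: b)
    then have "(- b * x) ^ k = (- b\<^sub>0 * x) ^ k * q ^ (n * k)"
      by (simp only: power_mult_distrib power_mult)
    then show ?thesis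
      unfolding powi[symmetric] by (simp add: mult_ac times_divide_eq_left times_divide_eq_right)
  qed
  show ?thesis
    using Phi2_b_expansion[OF q(1) c c' x[folded b\<^sub>0_def] y[folded b\<^sub>0_def], of n, unfolded coeff b]
    unfolding b\<^sub>0_def .
qed

theorem theorem9:
  fixes q a b b' c c' :: complex and n :: nat
  assumes "0 < norm q" and "norm q < 1"
    and "\<forall>m. qpoch c q m \<noteq> 0" and "\<forall>m. qpoch c' q m \<noteq> 0"
  shows "(\<exists>r>0. \<forall>x y. norm x < r \<and> norm y < r \<longrightarrow>
            Phi2 q a (b * q ^ n) b' c c' x y =
            (\<Sum>k\<le>n. qbinom q n k * q ^ (2 * (k choose 2)) *
               ((b * x) ^ k * qpoch a q k / qpoch c q k) *
               Phi2 q (a * q ^ k) (b * q ^ k) b' (c * q ^ k) c' x y))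
       \<and> (\<exists>r>0. \<forall>x y. norm x < r \<and> norm y < r \<longrightarrow>
            Phi2 q a (b * q powi (- int n)) b' c c' x y =
            (\<Sum>k\<le>n. qbinom q n k * q powi (int (k choose 2) - int (n * k)) *
               ((- b * x) ^ k * qpoch a q k / qpoch c q k) *
               Phi2 q (a * q ^ k) b b' (c * q ^ k) c' x y))"
proof -
  have q: "norm q < 1" "q \<noteq> 0"
    using assms(1,2) by auto
  show ?thesis
    using Phi2_b_mult_qpow_expansion[OF q(1) assms(3,4) order_refl order_refl]
      Phi2_b_div_qpow_expansion[OF q assms(3,4)]
    by (intro conjI[OF exI[where x = "Phi2_radius (norm a) (norm b) (norm b')"]
          exI[where x = "Phi2_radius (norm a) (norm (b * q powi (- int n))) (norm b')"]] conjI allI impI)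
      (simp_all add: Phi2_radius_pos)
qed

end
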